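(* Let $\alpha>0$ and $\hbar>0$ be constants, and let $\tilde g:\mathbb{R}\setminus\{0\}\to\mathbb{R}$ be a continuously differentiable function. Let $\psi\in L^{2}(\mathbb{R},dp)$ be a nonzero function that is continuously differentiable on $\mathbb{R}\setminus\{0\}$. For $\tau\in\mathbb{R}$ define $$\mathcal{A}_\psi(\tau)=4\pi\int_{\mathbb{R}}dp\,\left|\left(\frac{d\tilde g(p)}{dp}+\frac{\alpha^{2}}{p^{2}}\tau\right)\psi(p)-i\hbar\,\frac{d\psi(p)}{dp}\right|^{2}\in[0,\infty].$$ Then for every $\tau\in\mathbb{R}$ one has $\mathcal{A}_\psi(\tau)>0$; that is, there is no nonzero square-integrable $\psi$ and no $\tau_0\in\mathbb{R}$ with $\mathcal{A}_\psi(\tau_0)=0$.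
   Context: $\mathcal{A}_\psi(\tau)$ is the expectation value, in the physical state with reduced amplitude $\psi(p_a)$, of the gauge-invariant relational observable associated with the area $4\pi a^2$ of 2-spheres in the Schwarzschild interior, at relational clock time $\tau$; here $p=p_a$ and $\tilde g(p)=-\hbar\,g(-\alpha^2/p)$ where $g$ is the phase function specifying the choice of clock. *)

theory Defs
  imports "HOL-Analysis.Analysis"
begin

text \<open>The value of the integrand at p = 0 is irrelevant (null set).\<close>
definition area_expect ::
  "real \<Rightarrow> real \<Rightarrow> (real \<Rightarrow> real) \<Rightarrow> (real \<Rightarrow> complex) \<Rightarrow> real \<Rightarrow> ennreal" where
  "area_expect \<alpha> hbar gt \<psi> \<tau> =
     ennreal (4 * pi) *
     (\<integral>\<^sup>+ p. ennreal ((cmod (complex_of_real (deriv gt p + \<alpha>\<^sup>2 / p\<^sup>2 * \<tau>) * \<psi> p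
                              - \<i> * complex_of_real hbar * vector_derivative \<psi> (at p)))\<^sup>2) \<partial>lborel)"

end

theory Submission
  imports Defs
begin

text \<open>If the area expectation vanished at some \<tau>, the integrand, which is continuous off the origin,
  would vanish identically there, i.e. \<psi> would solve i hbar \<psi>' = c \<psi> with a real coefficient c.
  Such a solution has constant modulus on each half-line, and square integrability forces that
  constant to be 0, so \<psi> = 0 almost everywhere.\<close>

lemma nn_integral_lborel_pos_if_isCont:
  fixes f :: "real \<Rightarrow> real"
  assumes "isCont f p" "0 < f p"
  shows "0 < (\<integral>\<^sup>+ x. ennreal (f x) \<partial>lborel)"
proof -
  have "\<forall>\<^sub>F x in at p. f p / 2 < f x"
    using assms by (intro order_tendstoD) (auto simp: isCont_def)
  then obtain e where "0 < e" and e: "\<And>x. x \<noteq> p \<Longrightarrow> dist x p < e \<Longrightarrow> f p / 2 < f x"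
    by (auto simp: eventually_at)
  have bound: "ennreal (f p / 2) * indicator (ball p e) x \<le> ennreal (f x)" for x
  proof (cases "x \<in> ball p e")
    case True
    then have "f p / 2 \<le> f x"
      using e[of x] assms(2) by (cases "x = p") (auto simp: dist_commute)
    then show ?thesis
      using True by (simp add: ennreal_leI)
  qed simp
  have "0 < ennreal (f p / 2) * emeasure lborel (ball p e)"
    using \<open>0 < e\<close> assms(2) by (simp add: ennreal_zero_less_mult_iff ball_eq_greaterThanLessThan)
  also have "\<dots> = (\<integral>\<^sup>+ x. ennreal (f p / 2) * indicator (ball p e) x \<partial>lborel)"
    by (simp add: nn_integral_cmult_indicator)
  also have "\<dots> \<le> (\<integral>\<^sup>+ x. ennreal (f x) \<partial>lborel)"
    by (intro nn_integral_mono bound)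
  finally show ?thesis .
qed

lemma emeasure_lborel_greaterThan: "emeasure lborel {a<..} = (\<infinity> :: ennreal)" for a :: real
proof -
  have "of_nat n \<le> emeasure lborel {a<..}" for n
  proof -
    have "of_nat n = emeasure lborel {a<..<a + real n}"
      by (simp add: ennreal_of_nat_eq_real_of_nat)
    also have "\<dots> \<le> emeasure lborel {a<..}"
      by (intro emeasure_mono) auto
    finally show ?thesis .
  qed
  then have "(SUP n. of_nat n) \<le> emeasure lborel {a<..}"
    by (rule SUP_least)
  then show ?thesis
    by (simp add: ennreal_SUP_of_nat_eq_top top_unique)
qed

lemma emeasure_lborel_lessThan: "emeasure lborel {..<a} = (\<infinity> :: ennreal)" for a :: real
proof -
  have "of_nat n \<le> emeasure lborel {..<a}" for n
  proof -
    have "of_nat n = emeasure lborel {a - real n<..<a}"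
      by (simp add: ennreal_of_nat_eq_real_of_nat)
    also have "\<dots> \<le> emeasure lborel {..<a}"
      by (intro emeasure_mono) auto
    finally show ?thesis .
  qed
  then have "(SUP n. of_nat n) \<le> emeasure lborel {..<a}"
    by (rule SUP_least)
  then show ?thesis
    by (simp add: ennreal_SUP_of_nat_eq_top top_unique)
qed

lemma integrable_const_on_infinite_measure_eq_0:
  fixes f :: "'a \<Rightarrow> 'b::{banach, second_countable_topology}"
  assumes "integrable M f" "S \<in> sets M" "emeasure M S = \<infinity>" "\<And>x. x \<in> S \<Longrightarrow> f x = c"
  shows "c = 0"
proof (rule ccontr)
  assume "c \<noteq> 0"
  have "\<infinity> = (\<integral>\<^sup>+ x. ennreal (norm c) * indicator S x \<partial>M)"
    using \<open>c \<noteq> 0\<close> assms(2,3) by (simp add: nn_integral_cmult_indicator ennreal_mult_top)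
  also have "\<dots> \<le> (\<integral>\<^sup>+ x. norm (f x) \<partial>M)"
    using assms(4) by (intro nn_integral_mono) (auto simp: indicator_def)
  also have "\<dots> < \<infinity>"
    using assms(1) by (simp add: integrable_iff_bounded)
  finally show False by simp
qed

lemma integrable_deriv_zero_off_0_eq_0:
  fixes h :: "real \<Rightarrow> real"
  assumes "integrable lborel h" "\<And>x. x \<noteq> 0 \<Longrightarrow> (h has_real_derivative 0) (at x)" "x \<noteq> 0"
  shows "h x = 0"
proof -
  have "h x = 0" if "x \<in> S" "convex S" "S \<subseteq> - {0}" "S \<in> sets lborel" "emeasure lborel S = \<infinity>"
    for S :: "real set"
  proof -
    have "(h has_real_derivative 0) (at y within S)" if "y \<in> S" for y
      using assms(2)[of y] \<open>S \<subseteq> - {0}\<close> that by (auto intro: has_field_derivative_at_within)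
    then obtain c where "\<forall>y\<in>S. h y = c"
      using has_field_derivative_zero_constant[OF \<open>convex S\<close>] by blast
    with integrable_const_on_infinite_measure_eq_0[OF assms(1) that(4,5)] that(1) show ?thesis
      by auto
  qed
  from this[of "{0<..}"] this[of "{..<0}"] assms(3) show ?thesis
    by (auto simp: emeasure_lborel_greaterThan emeasure_lborel_lessThan neq_iff)
qed

lemma has_real_derivative_norm_power2:
  fixes f :: "real \<Rightarrow> 'a::real_inner"
  assumes "(f has_vector_derivative D) (at x within S)"
  shows "((\<lambda>x. (norm (f x))\<^sup>2) has_real_derivative 2 * inner (f x) D) (at x within S)"
proof -
  have "((\<lambda>x. inner (f x) (f x)) has_derivative (\<lambda>t. inner (f x) (t *\<^sub>R D) + inner (t *\<^sub>R D) (f x)))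
      (at x within S)"
    using assms unfolding has_vector_derivative_def by (intro has_derivative_inner)
  then show ?thesis
    unfolding has_field_derivative_def power2_norm_eq_inner
    by (rule has_derivative_eq_rhs) (simp add: fun_eq_iff inner_commute)
qed

lemma inner_eq_0_if_mult_eq_imaginary_mult:
  fixes z w :: complex
  assumes "complex_of_real c * z = \<i> * complex_of_real h * w" "h \<noteq> 0"
  shows "inner z w = 0"
proof -
  have Re_w: "h * Re w = c * Im z" and Im_w: "h * Im w = - c * Re z"
    using arg_cong[OF assms(1), of Re] arg_cong[OF assms(1), of Im] by simp_all
  have "h * inner z w = Re z * (h * Re w) + Im z * (h * Im w)"
    by (simp add: inner_complex_def algebra_simps)
  also have "\<dots> = 0"
    unfolding Re_w Im_w by (simp add: algebra_simps)
  finally show ?thesis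
    using assms(2) by simp
qed

lemma square_integrable_solution_eq_0:
  fixes \<psi> D :: "real \<Rightarrow> complex" and c :: "real \<Rightarrow> real"
  assumes "hbar \<noteq> 0" "integrable lborel (\<lambda>p. (cmod (\<psi> p))\<^sup>2)"
    and "\<And>p. p \<noteq> 0 \<Longrightarrow> (\<psi> has_vector_derivative D p) (at p)"
    and "\<And>p. p \<noteq> 0 \<Longrightarrow> complex_of_real (c p) * \<psi> p = \<i> * complex_of_real hbar * D p"
    and "p \<noteq> 0"
  shows "\<psi> p = 0"
proof -
  have "((\<lambda>p. (cmod (\<psi> p))\<^sup>2) has_real_derivative 0) (at x)" if "x \<noteq> 0" for x
    using has_real_derivative_norm_power2[OF assms(3)[OF that]]
      inner_eq_0_if_mult_eq_imaginary_mult[OF assms(4)[OF that] assms(1)]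
    by simp
  from integrable_deriv_zero_off_0_eq_0[OF assms(2) this assms(5)] show ?thesis
    by simp
qed

lemma area_expect_eq_0_imp_ode:
  fixes gt Dg :: "real \<Rightarrow> real" and \<psi> D\<psi> :: "real \<Rightarrow> complex"
  assumes Dg: "\<And>p. p \<noteq> 0 \<Longrightarrow> (gt has_real_derivative Dg p) (at p)" "continuous_on (- {0}) Dg"
    and D\<psi>: "\<And>p. p \<noteq> 0 \<Longrightarrow> (\<psi> has_vector_derivative D\<psi> p) (at p)" "continuous_on (- {0}) D\<psi>"
    and "area_expect \<alpha> hbar gt \<psi> \<tau> = 0" and "p \<noteq> 0"
  shows "complex_of_real (Dg p + \<alpha>\<^sup>2 / p\<^sup>2 * \<tau>) * \<psi> p = \<i> * complex_of_real hbar * D\<psi> p"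
proof -
  define F where "F p = (cmod (complex_of_real (Dg p + \<alpha>\<^sup>2 / p\<^sup>2 * \<tau>) * \<psi> p
    - \<i> * complex_of_real hbar * D\<psi> p))\<^sup>2" for p
  have derivs: "deriv gt q = Dg q" "vector_derivative \<psi> (at q) = D\<psi> q" if "q \<noteq> 0" for q
    using Dg(1)[OF that] D\<psi>(1)[OF that] by (simp_all add: DERIV_imp_deriv vector_derivative_at)
  have integrand_AE: "AE q in lborel. ennreal ((cmod (complex_of_real (deriv gt q + \<alpha>\<^sup>2 / q\<^sup>2 * \<tau>) * \<psi> q
      - \<i> * complex_of_real hbar * vector_derivative \<psi> (at q)))\<^sup>2) = ennreal (F q)"
    using AE_lborel_singleton[of 0] by eventually_elim (simp add: F_def derivs)
  have "\<not> 0 < (\<integral>\<^sup>+ q. ennreal (F q) \<partial>lborel)"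
    using \<open>area_expect \<alpha> hbar gt \<psi> \<tau> = 0\<close>
    unfolding area_expect_def nn_integral_cong_AE[OF integrand_AE] by simp
  moreover have "continuous_on (- {0}) \<psi>"
    using D\<psi>(1) by (intro continuous_at_imp_continuous_on ballI differentiable_imp_continuous_within
        differentiableI_vector) auto
  with Dg(2) D\<psi>(2) have "continuous_on (- {0}) F"
    unfolding F_def by (intro continuous_intros) auto
  then have "isCont F p"
    using \<open>p \<noteq> 0\<close> by (simp add: continuous_on_eq_continuous_at open_Compl)
  ultimately have "\<not> 0 < F p"
    using nn_integral_lborel_pos_if_isCont by blast
  then show ?thesis
    by (simp add: F_def)
qed

theorem mainTheorem1:
  fixes \<alpha> hbar :: real and gt :: "real \<Rightarrow> real" and \<psi> :: "real \<Rightarrow> complex"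
  assumes "\<alpha> > 0" and "hbar > 0"
    and "gt C1_differentiable_on (- {0})"
    and "\<psi> \<in> borel_measurable lborel"
    and "integrable lborel (\<lambda>p. (cmod (\<psi> p))\<^sup>2)"
    and "\<not> (AE p in lborel. \<psi> p = 0)"
    and "\<psi> C1_differentiable_on (- {0})"
  shows "\<forall>\<tau>::real. area_expect \<alpha> hbar gt \<psi> \<tau> > 0"
proof
  fix \<tau> :: real
  obtain Dg where Dg: "\<And>p. p \<noteq> 0 \<Longrightarrow> (gt has_real_derivative Dg p) (at p)" "continuous_on (- {0}) Dg"
    using assms(3) by (auto simp: C1_differentiable_on_def has_real_derivative_iff_has_vector_derivative)
  obtain D\<psi> where D\<psi>: "\<And>p. p \<noteq> 0 \<Longrightarrow> (\<psi> has_vector_derivative D\<psi> p) (at p)" "continuous_on (- {0}) D\<psi>"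
    using assms(7) by (auto simp: C1_differentiable_on_def)
  show "area_expect \<alpha> hbar gt \<psi> \<tau> > 0"
  proof (rule ccontr)
    assume "\<not> area_expect \<alpha> hbar gt \<psi> \<tau> > 0"
    then have "area_expect \<alpha> hbar gt \<psi> \<tau> = 0"
      by simp
    have ode: "complex_of_real (Dg p + \<alpha>\<^sup>2 / p\<^sup>2 * \<tau>) * \<psi> p = \<i> * complex_of_real hbar * D\<psi> p"
      if "p \<noteq> 0" for p
      by (rule area_expect_eq_0_imp_ode[OF Dg D\<psi> \<open>area_expect \<alpha> hbar gt \<psi> \<tau> = 0\<close> that])
    have \<psi>_eq_0: "\<psi> p = 0" if "p \<noteq> 0" for p
      using square_integrable_solution_eq_0[OF _ assms(5) D\<psi>(1) ode that] assms(2) by simp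
    have "AE p in lborel. \<psi> p = 0"
      using AE_lborel_singleton[of 0] by eventually_elim (rule \<psi>_eq_0)
    with assms(6) show False ..
  qed
qed

end
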